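(* Let $A,B,C,D$ be pairwise intersecting compact convex sets in the plane. If $o(ABC)=o(ABD)=0$ but $o(ACD)\ne0$ and $o(BCD)\ne0$, then $o(ACD)=o(BCD)$.
   Context: For three pairwise intersecting compact convex sets $X,Y,Z$ in the plane: $o(XYZ)=0$ if $X\cap Y\cap Z\neq\emptyset$; otherwise $o(XYZ)=o(xyz)$ for any $x\in Y\cap Z$, $y\in X\cap Z$, $z\in X\cap Y$, where for points $o(xyz)=+1$ for a counterclockwise and $-1$ for a clockwise triangle (independent of the choice). *)

theory Defs
  imports "HOL-Analysis.Analysis"
begin

text \<open>Points of the plane are pairs of reals. Orientation of a point triple:
  +1 counterclockwise, -1 clockwise (0 for collinear triples, which never arise
  in the set-level definition below).\<close>

definition orient_pts :: "real \<times> real \<Rightarrow> real \<times> real \<Rightarrow> real \<times> real \<Rightarrow> int" where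
  "orient_pts x y z =
     (let d = (fst y - fst x) * (snd z - snd x) - (snd y - snd x) * (fst z - fst x)
      in if d > 0 then 1 else if d < 0 then -1 else 0)"

text \<open>Orientation of three pairwise intersecting compact convex sets:
  0 if they have a common point, otherwise the orientation of any
  x in Y \<inter> Z, y in X \<inter> Z, z in X \<inter> Y (independent of the choice).\<close>

definition orient_sets :: "(real \<times> real) set \<Rightarrow> (real \<times> real) set \<Rightarrow> (real \<times> real) set \<Rightarrow> int" where
  "orient_sets X Y Z =
     (if X \<inter> Y \<inter> Z \<noteq> {} then 0
      else orient_pts (SOME x. x \<in> Y \<inter> Z) (SOME y. y \<in> X \<inter> Z) (SOME z. z \<in> X \<inter> Y))"

end

theory Submission
  imports Defs
begin

text \<open>Since \<open>o(ABC) = o(ABD) = 0\<close>, there are points \<open>p \<in> A \<inter> B \<inter> C\<close> and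
  \<open>q \<in> A \<inter> B \<inter> D\<close>. For any \<open>x \<in> C \<inter> D\<close> the triple \<open>(x, q, p)\<close> is then an
  admissible choice both for \<open>(A, C, D)\<close> and for \<open>(B, C, D)\<close>, so both orientations
  equal \<open>o(xqp)\<close>. The substance is that the orientation of sets is well defined:
  for convex sets without a common point no admissible triple is collinear (one of its
  points would lie between the other two and hence in all three sets), and the sign of
  the determinant cannot change while one point moves through its convex intersection.\<close>

definition orient_det :: "real \<times> real \<Rightarrow> real \<times> real \<Rightarrow> real \<times> real \<Rightarrow> real" where
  "orient_det x y z = (fst y - fst x) * (snd z - snd x) - (snd y - snd x) * (fst z - fst x)"

lemma orient_pts_sgn: "real_of_int (orient_pts x y z) = sgn (orient_det x y z)"
  unfolding orient_pts_def orient_det_def Let_def by (simp add: sgn_if)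

lemma orient_det_rotate: "orient_det x y z = orient_det y z x"
  unfolding orient_det_def by (simp add: algebra_simps)

lemma orient_det_combination:
  "orient_det x ((1 - t) *\<^sub>R a + t *\<^sub>R b) z = (1 - t) * orient_det x a z + t * orient_det x b z"
  unfolding orient_det_def by (simp add: algebra_simps)

lemma collinear_if_orient_det_eq_0:
  assumes "orient_det x y z = 0"
  shows "collinear {x, y, z}"
proof -
  define v where "v = x - y"
  define w where "w = z - y"
  have cross: "fst v * snd w = snd v * fst w"
    using assms unfolding orient_det_def v_def w_def by (simp add: algebra_simps)
  have "w = ((v \<bullet> w) / (v \<bullet> v)) *\<^sub>R v" if "v \<noteq> 0"
  proof -
    have "v \<bullet> v \<noteq> 0" using that by simp
    then show ?thesis
      using cross by (simp add: prod_eq_iff inner_prod_def field_simps)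
  qed
  then have "collinear {0, v, w}"
    by (auto simp: collinear_lemma)
  then show ?thesis
    by (simp add: collinear_3 v_def w_def)
qed

lemma orient_det_nonzero:
  assumes "convex X" "convex Y" "convex Z" "X \<inter> Y \<inter> Z = {}"
    and "x \<in> Y \<inter> Z" "y \<in> X \<inter> Z" "z \<in> X \<inter> Y"
  shows "orient_det x y z \<noteq> 0"
proof
  assume "orient_det x y z = 0"
  then have "between (y, z) x \<or> between (z, x) y \<or> between (x, y) z"
    using collinear_if_orient_det_eq_0 collinear_between_cases by blast
  then have "x \<in> X \<or> y \<in> Y \<or> z \<in> Z"
    using assms by (meson IntE closed_segment_subset subsetD between_mem_segment)
  then show False
    using assms by blast
qed

lemma sgn_orient_det_middle_indep:
  assumes "convex X" "convex Y" "convex Z" "X \<inter> Y \<inter> Z = {}"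
    and "x \<in> Y \<inter> Z" "y \<in> X \<inter> Z" "y' \<in> X \<inter> Z" "z \<in> X \<inter> Y"
  shows "sgn (orient_det x y z) = sgn (orient_det x y' z)"
proof -
  txt \<open>The determinant is affine in its middle argument, so a sign change along a
    segment in \<open>X \<inter> Z\<close> produces a degenerate admissible triple.\<close>
  have no_sign_change: False
    if "orient_det x a z > 0" "orient_det x b z < 0" "a \<in> X \<inter> Z" "b \<in> X \<inter> Z" for a b
  proof -
    define t where "t = orient_det x a z / (orient_det x a z - orient_det x b z)"
    have "0 \<le> t" "t \<le> 1"
      using that(1,2) by (auto simp: t_def field_simps)
    then have "(1 - t) *\<^sub>R a + t *\<^sub>R b \<in> X \<inter> Z"
      using that(3,4) assms(1,3) by (auto intro: convexD)
    moreover have "orient_det x ((1 - t) *\<^sub>R a + t *\<^sub>R b) z = 0"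
      using that(1,2) unfolding orient_det_combination t_def by (simp add: field_simps)
    ultimately show False
      using orient_det_nonzero assms(1-5,8) by blast
  qed
  have "orient_det x y z \<noteq> 0" "orient_det x y' z \<noteq> 0"
    using orient_det_nonzero assms by blast+
  moreover have "orient_det x y z > 0 \<longleftrightarrow> orient_det x y' z > 0"
    using no_sign_change[of y y'] no_sign_change[of y' y] assms(6,7) calculation by force
  ultimately show ?thesis
    by (simp add: sgn_if)
qed

lemma sgn_orient_det_indep:
  assumes "convex X" "convex Y" "convex Z" "X \<inter> Y \<inter> Z = {}"
    and "x \<in> Y \<inter> Z" "y \<in> X \<inter> Z" "z \<in> X \<inter> Y"
    and "x' \<in> Y \<inter> Z" "y' \<in> X \<inter> Z" "z' \<in> X \<inter> Y"
  shows "sgn (orient_det x y z) = sgn (orient_det x' y' z')"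
proof -
  have rotated: "Z \<inter> X \<inter> Y = {}" "Y \<inter> Z \<inter> X = {}"
    using assms(4) by blast+
  have "sgn (orient_det x y z) = sgn (orient_det x y' z)"
    using sgn_orient_det_middle_indep assms(1-7,9) by blast
  also have "\<dots> = sgn (orient_det z x y')"
    using orient_det_rotate by metis
  also have "\<dots> = sgn (orient_det z x' y')"
    using sgn_orient_det_middle_indep[of Z X Y] rotated assms by blast
  also have "\<dots> = sgn (orient_det y' z x')"
    using orient_det_rotate by metis
  also have "\<dots> = sgn (orient_det y' z' x')"
    using sgn_orient_det_middle_indep[of Y Z X] rotated assms by blast
  also have "\<dots> = sgn (orient_det x' y' z')"
    using orient_det_rotate by metis
  finally show ?thesis .
qed

lemma orient_sets_eq_orient_pts:
  assumes "convex X" "convex Y" "convex Z" "X \<inter> Y \<inter> Z = {}"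
    and "x \<in> Y \<inter> Z" "y \<in> X \<inter> Z" "z \<in> X \<inter> Y"
  shows "orient_sets X Y Z = orient_pts x y z"
proof -
  have "(SOME x. x \<in> Y \<inter> Z) \<in> Y \<inter> Z" "(SOME y. y \<in> X \<inter> Z) \<in> X \<inter> Z"
    "(SOME z. z \<in> X \<inter> Y) \<in> X \<inter> Y"
    using assms(5-7) by (meson someI)+
  then have "sgn (orient_det (SOME x. x \<in> Y \<inter> Z) (SOME y. y \<in> X \<inter> Z) (SOME z. z \<in> X \<inter> Y))
      = sgn (orient_det x y z)"
    using sgn_orient_det_indep assms by blast
  then show ?thesis
    using assms(4) unfolding orient_sets_def by (simp flip: orient_pts_sgn)
qed

lemma orient_sets_eq_0_iff:
  assumes "convex X" "convex Y" "convex Z"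
    and "X \<inter> Y \<noteq> {}" "X \<inter> Z \<noteq> {}" "Y \<inter> Z \<noteq> {}"
  shows "orient_sets X Y Z = 0 \<longleftrightarrow> X \<inter> Y \<inter> Z \<noteq> {}"
proof
  assume "orient_sets X Y Z = 0"
  show "X \<inter> Y \<inter> Z \<noteq> {}"
  proof
    assume empty: "X \<inter> Y \<inter> Z = {}"
    obtain x y z where "x \<in> Y \<inter> Z" "y \<in> X \<inter> Z" "z \<in> X \<inter> Y"
      using assms(4-6) by blast
    then have "orient_pts x y z = 0"
      using \<open>orient_sets X Y Z = 0\<close> orient_sets_eq_orient_pts assms(1-3) empty by simp
    then have "orient_det x y z = 0"
      using orient_pts_sgn[of x y z] by (simp add: sgn_eq_0_iff)
    then show False
      using orient_det_nonzero assms(1-3) empty \<open>x \<in> Y \<inter> Z\<close> \<open>y \<in> X \<inter> Z\<close> \<open>z \<in> X \<inter> Y\<close> by blast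
  qed
qed (simp add: orient_sets_def)

theorem lemma3:
  fixes A B C D :: "(real \<times> real) set"
  assumes "compact A" "compact B" "compact C" "compact D"
    and "convex A" "convex B" "convex C" "convex D"
    and "A \<inter> B \<noteq> {}" "A \<inter> C \<noteq> {}" "A \<inter> D \<noteq> {}"
    and "B \<inter> C \<noteq> {}" "B \<inter> D \<noteq> {}" "C \<inter> D \<noteq> {}"
    and "orient_sets A B C = 0" "orient_sets A B D = 0"
    and "orient_sets A C D \<noteq> 0" "orient_sets B C D \<noteq> 0"
  shows "orient_sets A C D = orient_sets B C D"
proof -
  obtain p where p: "p \<in> A \<inter> B \<inter> C"
    using orient_sets_eq_0_iff[of A B C] assms by blast
  obtain q where q: "q \<in> A \<inter> B \<inter> D"
    using orient_sets_eq_0_iff[of A B D] assms by blast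
  obtain x where x: "x \<in> C \<inter> D"
    using assms by blast
  have "A \<inter> C \<inter> D = {}" "B \<inter> C \<inter> D = {}"
    using assms(17,18) unfolding orient_sets_def by metis+
  then have "orient_sets A C D = orient_pts x q p" "orient_sets B C D = orient_pts x q p"
    using orient_sets_eq_orient_pts p q x assms(5-8) by blast+
  then show ?thesis
    by simp
qed

end
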